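(* Let $n>5$ with $n\equiv 0\pmod 4$, and consider even $r\in[2,n-2]$. (i) For $r\equiv 0\pmod 4$, $E(D_n^s[r,\boldsymbol{n-r}])$ is strictly increasing in $r$; hence $E(D_n^s[n-4,\boldsymbol 4])>E(D_n^s[n-8,\boldsymbol 8])>\dots>E(D_n^s[8,\boldsymbol{n-8}])>E(D_n^s[4,\boldsymbol{n-4}])$, and the maximum over such $r$ is attained by $D_n^s[n-4,\boldsymbol 4]$ (negative cycle of length $4$). (ii) For $r\equiv 2\pmod 4$, $E(D_n^s[r,\boldsymbol{n-r}])$ is strictly decreasing in $r$; hence $E(D_n^s[2,\boldsymbol{n-2}])>E(D_n^s[6,\boldsymbol{n-6}])>\dots>E(D_n^s[n-6,\boldsymbol 6])>E(D_n^s[n-2,\boldsymbol 2])$, and the maximum over such $r$ is attained at $r=2$.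
   Context: A signed digraph (sidigraph) is a digraph in which every arc carries a sign $+1$ or $-1$; its adjacency matrix $A(S)=[a_{ij}]$ has $a_{ij}$ equal to the sign of the arc $w_iw_j$ if it exists and $0$ otherwise. If $\rho_1,\dots,\rho_n$ are the eigenvalues of $A(S)$, the energy of $S$ is $E(S)=\sum_{k=1}^n|\mathrm{Re}(\rho_k)|$. The sign of a directed cycle is the product of the signs of its arcs. For $k\ge 2$, $C_k$ denotes a directed cycle of length $k$ with sign $+1$ and $\boldsymbol{C}_k$ a directed cycle of length $k$ with sign $-1$. It is known that $E(C_k)=2\cot\frac{\pi}{k}$ if $k\equiv0\pmod 4$, $2\csc\frac{\pi}{k}$ if $k\equiv 2\pmod 4$, $\csc\frac{\pi}{2k}$ if $k$ is odd; and $E(\boldsymbol C_k)=2\csc\frac{\pi}{k}$ if $k\equiv0\pmod 4$, $2\cot\frac{\pi}{k}$ if $k\equiv 2\pmod 4$, $\csc\frac{\pi}{2k}$ if $k$ is odd. For integers $p,q\ge 2$ with $p+q\le n$, $D_n^s[p,q]$, $D_n^s[\boldsymbol p,\boldsymbol q]$, $D_n^s[\boldsymbol p,q]$, $D_n^s[p,\boldsymbol q]$ denote an $n$-vertex sidigraph whose only directed cycles are two vertex-disjoint cycles of lengths $p$ and $q$ (all other vertices lying on no directed cycle), where a bold entry indicates that the cycle of that length is negative and a non-bold entry that it is positive. Its energy is the sum of the energies of its two cycles, e.g. $E(D_n^s[p,\boldsymbol q])=E(C_p)+E(\boldsymbol C_q)$; in particular the order of the two entries does not matter. *)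

theory Defs
  imports Complex_Main
begin

definition E_pos_cycle :: "nat \<Rightarrow> real" where
  "E_pos_cycle k =
     (if k mod 4 = 0 then 2 * cot (pi / real k)
      else if k mod 4 = 2 then 2 / sin (pi / real k)
      else 1 / sin (pi / (2 * real k)))"

definition E_neg_cycle :: "nat \<Rightarrow> real" where
  "E_neg_cycle k =
     (if k mod 4 = 0 then 2 / sin (pi / real k)
      else if k mod 4 = 2 then 2 * cot (pi / real k)
      else 1 / sin (pi / (2 * real k)))"

text \<open>Energy of D_n^s[p, bold q]: positive p-cycle and negative q-cycle, vertex-disjoint,
  other vertices on no cycle; the energy is the sum of the two cycle energies.\<close>
definition E_D_pos_neg :: "nat \<Rightarrow> nat \<Rightarrow> nat \<Rightarrow> real" where
  "E_D_pos_neg n p q = E_pos_cycle p + E_neg_cycle q"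

end

theory Submission
  imports Defs
begin

text \<open>Both \<open>cot (\<pi>/x)\<close> and \<open>csc (\<pi>/x)\<close> equal \<open>x/\<pi> + O(1/x)\<close>. The remainder
  \<open>cot (\<pi>/x) - x/\<pi>\<close> is strictly increasing in \<open>x\<close>, because \<open>cot t - 1/t\<close> decreases on
  \<open>(0, \<pi>)\<close> (as \<open>sin t < t\<close>); the remainder \<open>csc (\<pi>/x) - x/\<pi>\<close> is decreasing for \<open>x \<ge> 2\<close>,
  because \<open>csc t - 1/t\<close> increases on \<open>(0, \<pi>/2]\<close> (as \<open>t\<^sup>2 cos t \<le> sin\<^sup>2 t\<close>, by Taylor bounds).
  Since \<open>r + (n - r) = n\<close>, the linear parts of the two cycle energies add up to the constant
  \<open>2n/\<pi>\<close>, and only the remainders at \<open>r\<close> and \<open>n - r\<close> vary; their roles are swapped between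
  the cases \<open>r \<equiv> 0\<close> and \<open>r \<equiv> 2 (mod 4)\<close>.\<close>

lemma nonneg_if_deriv_nonneg_from_zero:
  fixes f f' :: "real \<Rightarrow> real"
  assumes "f 0 = 0" and "0 \<le> x"
    and "\<And>u. 0 \<le> u \<Longrightarrow> (f has_real_derivative f' u) (at u)"
    and "\<And>u. 0 \<le> u \<Longrightarrow> 0 \<le> f' u"
  shows "0 \<le> f x"
  using DERIV_nonneg_imp_nondecreasing[of 0 x f] assms by auto

lemma cos_ge_taylor2: "0 \<le> x \<Longrightarrow> 1 - x^2/2 \<le> cos (x::real)"
  using nonneg_if_deriv_nonneg_from_zero[of "\<lambda>x. cos x - 1 + x^2/2" x "\<lambda>u. u - sin u"]
    sin_x_le_x by (force intro!: derivative_eq_intros)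

lemma sin_ge_taylor3: "0 \<le> x \<Longrightarrow> x - x^3/6 \<le> sin (x::real)"
  using nonneg_if_deriv_nonneg_from_zero[of "\<lambda>x. sin x - x + x^3/6" x "\<lambda>u. cos u - 1 + u^2/2"]
    cos_ge_taylor2 by (force intro!: derivative_eq_intros simp: power2_eq_square)

lemma cos_le_taylor4: "0 \<le> x \<Longrightarrow> cos (x::real) \<le> 1 - x^2/2 + x^4/24"
  using nonneg_if_deriv_nonneg_from_zero[of "\<lambda>x. 1 - x^2/2 + x^4/24 - cos x" x
      "\<lambda>u. sin u - u + u^3/6"]
    sin_ge_taylor3 by (force intro!: derivative_eq_intros simp: power2_eq_square power3_eq_cube)

lemma sq_mult_cos_le_sin_sq:
  fixes t :: real assumes "0 < t" "t \<le> pi/2"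
  shows "t^2 * cos t \<le> (sin t)^2"
proof -
  have "t^2 \<le> 2^2"
    using assms pi_less_4 by (intro power_mono) auto
  then have t_sq: "t^2 \<le> 4" by simp
  have "t^2 * cos t \<le> t^2 * (1 - t^2/2 + t^4/24)"
    using cos_le_taylor4[of t] assms by (intro mult_left_mono) auto
  also have "\<dots> \<le> (t - t^3/6)^2"
  proof -
    have "t^4 * t^2 \<le> t^4 * 12" using t_sq by (intro mult_left_mono) auto
    then show ?thesis by (simp add: algebra_simps power2_eq_square power3_eq_cube power4_eq_xxxx)
  qed
  also have "\<dots> \<le> (sin t)^2"
  proof (rule power_mono)
    have "t^3 \<le> 4 * t"
      using mult_right_mono[OF t_sq, of t] assms by (simp add: power3_eq_cube power2_eq_square)
    then show "0 \<le> t - t^3/6" using assms by simp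
  qed (use sin_ge_taylor3[of t] assms in auto)
  finally show ?thesis .
qed

lemma sin_less_self: assumes "0 < x" "x < pi" shows "sin x < x"
proof -
  have "sin x = 2 * sin (x/2) * cos (x/2)"
    using sin_double[of "x/2"] by simp
  also have "\<dots> < 2 * sin (x/2)"
    using assms cos_monotone_0_pi[of 0 "x/2"] by (simp add: sin_gt_zero)
  also have "\<dots> \<le> x"
    using sin_x_le_x[of "x/2"] assms by simp
  finally show ?thesis .
qed

lemma cot_minus_inverse_strict_antimono:
  fixes a b :: real assumes "0 < a" "a < b" "b < pi"
  shows "cot b - 1/b < cot a - 1/a"
proof -
  have "cos b / sin b - 1/b < cos a / sin a - 1/a"
  proof (rule DERIV_neg_imp_decreasing[OF \<open>a < b\<close>])
    fix x assume "a \<le> x" "x \<le> b"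
    then have x_pos: "0 < x" "x < pi" and sin_pos: "0 < sin x"
      using assms by (auto intro!: sin_gt_zero)
    have "((\<lambda>t. cos t / sin t - 1/t) has_real_derivative
        (- (sin x * sin x) - cos x * cos x) / (sin x * sin x) + 1/(x*x)) (at x)"
      using sin_pos x_pos by (auto intro!: derivative_eq_intros simp: power2_eq_square field_simps)
    moreover have "- (sin x * sin x) - cos x * cos x = -1"
      using sin_cos_squared_add[of x] by (simp add: power2_eq_square)
    moreover have "1/(x*x) < 1/(sin x * sin x)"
      using sin_pos sin_less_self[OF x_pos] by (intro divide_strict_left_mono mult_strict_mono) auto
    ultimately show "\<exists>y. ((\<lambda>t. cos t / sin t - 1/t) has_real_derivative y) (at x) \<and> y < 0"
      by force
  qed
  then show ?thesis by (simp add: cot_def)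
qed

lemma csc_minus_inverse_mono:
  fixes a b :: real assumes "0 < a" "a \<le> b" "b \<le> pi/2"
  shows "1/sin a - 1/a \<le> 1/sin b - 1/b"
proof (rule DERIV_nonneg_imp_nondecreasing[OF \<open>a \<le> b\<close>])
  fix x assume "a \<le> x" "x \<le> b"
  then have x_pos: "0 < x" "x \<le> pi/2" and sin_pos: "0 < sin x"
    using assms by (auto intro!: sin_gt_zero)
  have "((\<lambda>t. 1/sin t - 1/t) has_real_derivative - cos x/(sin x * sin x) + 1/(x*x)) (at x)"
    using sin_pos x_pos by (auto intro!: derivative_eq_intros simp: power2_eq_square field_simps)
  moreover have "cos x/(sin x * sin x) \<le> 1/(x*x)"
    using sq_mult_cos_le_sin_sq[OF x_pos] sin_pos x_pos
    by (simp add: divide_simps power2_eq_square mult.commute)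
  ultimately show "\<exists>y. ((\<lambda>t. 1/sin t - 1/t) has_real_derivative y) (at x) \<and> 0 \<le> y"
    by force
qed

definition cot_excess :: "real \<Rightarrow> real" where
  "cot_excess x = cot (pi / x) - x / pi"

definition csc_excess :: "real \<Rightarrow> real" where
  "csc_excess x = 1 / sin (pi / x) - x / pi"

lemma strict_mono_on_cot_excess: "strict_mono_on {1<..} cot_excess"
proof (rule strict_mono_onI)
  fix x y :: real assume "x \<in> {1<..}" "y \<in> {1<..}" "x < y"
  then have "cot (pi/x) - 1/(pi/x) < cot (pi/y) - 1/(pi/y)"
    by (intro cot_minus_inverse_strict_antimono) (auto simp: field_simps)
  then show "cot_excess x < cot_excess y" by (simp add: cot_excess_def)
qed

lemma antimono_on_csc_excess: "antimono_on {2..} csc_excess"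
proof (rule monotone_onI)
  fix x y :: real assume "x \<in> {2..}" "y \<in> {2..}" "x \<le> y"
  then have "1/sin (pi/y) - 1/(pi/y) \<le> 1/sin (pi/x) - 1/(pi/x)"
    by (intro csc_minus_inverse_mono) (auto simp: field_simps)
  then show "csc_excess y \<le> csc_excess x" by (simp add: csc_excess_def)
qed

lemma E_D_pos_neg_mod4_0:
  assumes "n mod 4 = 0" "r mod 4 = 0" "r \<le> n"
  shows "E_D_pos_neg n r (n - r) = 2 * real n / pi + 2 * cot_excess r + 2 * csc_excess (n - r)"
proof -
  have "(n - r) mod 4 = 0" using assms by presburger
  then have "E_D_pos_neg n r (n - r) = 2 * cot (pi / r) + 2 * (1 / sin (pi / (n - r)))"
    using assms(2) by (simp add: E_D_pos_neg_def E_pos_cycle_def E_neg_cycle_def)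
  moreover have "real (n - r) / pi = real n / pi - real r / pi"
    using assms(3) by (simp add: diff_divide_distrib)
  ultimately show ?thesis
    unfolding cot_excess_def csc_excess_def by simp
qed

lemma E_D_pos_neg_mod4_2:
  assumes "n mod 4 = 0" "r mod 4 = 2" "r \<le> n"
  shows "E_D_pos_neg n r (n - r) = 2 * real n / pi + 2 * csc_excess r + 2 * cot_excess (n - r)"
proof -
  obtain a where "n = 4 * a" using assms(1) by auto
  moreover obtain b where "r = 4 * b + 2" using assms(2) by (metis div_mult_mod_eq mult.commute)
  ultimately have "n - r = 2 + (a - b - 1) * 4" using assms(3) by linarith
  then have "(n - r) mod 4 = 2" by (simp only: mod_mult_self1) simp
  then have "E_D_pos_neg n r (n - r) = 2 * (1 / sin (pi / r)) + 2 * cot (pi / (n - r))"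
    using assms(2) by (simp add: E_D_pos_neg_def E_pos_cycle_def E_neg_cycle_def)
  moreover have "real (n - r) / pi = real n / pi - real r / pi"
    using assms(3) by (simp add: diff_divide_distrib)
  ultimately show ?thesis
    unfolding cot_excess_def csc_excess_def by simp
qed

lemma E_D_pos_neg_strict_mono_mod4_0:
  assumes "n mod 4 = 0" "r1 mod 4 = 0" "r2 mod 4 = 0" "2 \<le> r1" "r1 < r2" "r2 \<le> n - 2"
  shows "E_D_pos_neg n r1 (n - r1) < E_D_pos_neg n r2 (n - r2)"
proof -
  have "cot_excess r1 < cot_excess r2"
    using assms by (intro strict_mono_onD[OF strict_mono_on_cot_excess]) auto
  moreover have "csc_excess (n - r1) \<le> csc_excess (n - r2)"
    using monotone_onD[OF antimono_on_csc_excess, of "n - r2" "n - r1"] assms by auto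
  moreover have "r1 \<le> n" "r2 \<le> n"
    using assms by linarith+
  ultimately show ?thesis
    using E_D_pos_neg_mod4_0[of n r1] E_D_pos_neg_mod4_0[of n r2] assms(1-3) by linarith
qed

lemma E_D_pos_neg_strict_antimono_mod4_2:
  assumes "n mod 4 = 0" "r1 mod 4 = 2" "r2 mod 4 = 2" "2 \<le> r1" "r1 < r2" "r2 \<le> n - 2"
  shows "E_D_pos_neg n r2 (n - r2) < E_D_pos_neg n r1 (n - r1)"
proof -
  have "cot_excess (n - r2) < cot_excess (n - r1)"
    using assms by (intro strict_mono_onD[OF strict_mono_on_cot_excess]) auto
  moreover have "csc_excess r2 \<le> csc_excess r1"
    using monotone_onD[OF antimono_on_csc_excess, of r1 r2] assms by auto
  moreover have "r1 \<le> n" "r2 \<le> n"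
    using assms by linarith+
  ultimately show ?thesis
    using E_D_pos_neg_mod4_2[of n r1] E_D_pos_neg_mod4_2[of n r2] assms(1-3) by linarith
qed

lemma E_D_pos_neg_le_max_mod4_0:
  assumes "n mod 4 = 0" "r mod 4 = 0" "2 \<le> r" "r \<le> n - 2"
  shows "E_D_pos_neg n r (n - r) \<le> E_D_pos_neg n (n - 4) 4"
proof -
  have "(n - 4) mod 4 = 0" "n - (n - 4) = 4" "r = n - 4 \<or> r < n - 4"
    using assms by presburger+
  then show ?thesis
    using E_D_pos_neg_strict_mono_mod4_0[of n r "n - 4"] assms by fastforce
qed

lemma E_D_pos_neg_le_max_mod4_2:
  assumes "n mod 4 = 0" "r mod 4 = 2" "2 \<le> r" "r \<le> n - 2"
  shows "E_D_pos_neg n r (n - r) \<le> E_D_pos_neg n 2 (n - 2)"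
  using E_D_pos_neg_strict_antimono_mod4_2[of n 2 r] assms
  by (cases "r = 2") (auto simp: less_imp_le)

theorem lemma3p3:
  fixes n :: nat
  assumes "n > 5" and "n mod 4 = 0"
  shows "(\<forall>r1 r2. even r1 \<and> even r2 \<and> 2 \<le> r1 \<and> r2 \<le> n - 2 \<and>
            r1 mod 4 = 0 \<and> r2 mod 4 = 0 \<and> r1 < r2 \<longrightarrow>
            E_D_pos_neg n r1 (n - r1) < E_D_pos_neg n r2 (n - r2))
       \<and> (\<forall>r. even r \<and> 2 \<le> r \<and> r \<le> n - 2 \<and> r mod 4 = 0 \<longrightarrow>
            E_D_pos_neg n r (n - r) \<le> E_D_pos_neg n (n - 4) 4)
       \<and> (\<forall>r1 r2. even r1 \<and> even r2 \<and> 2 \<le> r1 \<and> r2 \<le> n - 2 \<and>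
            r1 mod 4 = 2 \<and> r2 mod 4 = 2 \<and> r1 < r2 \<longrightarrow>
            E_D_pos_neg n r2 (n - r2) < E_D_pos_neg n r1 (n - r1))
       \<and> (\<forall>r. even r \<and> 2 \<le> r \<and> r \<le> n - 2 \<and> r mod 4 = 2 \<longrightarrow>
            E_D_pos_neg n r (n - r) \<le> E_D_pos_neg n 2 (n - 2))"
  using assms(2)
  by (intro conjI allI impI; elim conjE)
    (simp_all add: E_D_pos_neg_strict_mono_mod4_0 E_D_pos_neg_le_max_mod4_0
      E_D_pos_neg_strict_antimono_mod4_2 E_D_pos_neg_le_max_mod4_2)

end
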